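(* Let $k\ge2$ and define $n_0(k)=2k+1$ for $k\ge3$ and $n_0(2)=6$. Then $\chi_D(LG_1(k,n))=3$ for all $n\ge n_0(k)$.
   Context: For integers $n,k$ with $2k<n$, $LG_1(k,n)$ is the bipartite graph with parts $L=\binom{[n]}{k-1}$ (the $(k-1)$-subsets of $[n]$) and $R=\binom{[n]}{k}$ (the $k$-subsets of $[n]$), where $u\in L$ and $v\in R$ are adjacent iff $u\subset v$. A coloring is distinguishing if the only graph automorphism mapping every color class onto itself is the identity; $\chi_D(G)$ is the minimum number of colors of a proper distinguishing coloring of $G$. *)

theory Defs
  imports Main
begin

definition is_automorphism :: "'v set \<Rightarrow> ('v \<Rightarrow> 'v \<Rightarrow> bool) \<Rightarrow> ('v \<Rightarrow> 'v) \<Rightarrow> bool" where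
  "is_automorphism V E f \<longleftrightarrow> bij_betw f V V \<and>
     (\<forall>u\<in>V. \<forall>v\<in>V. E (f u) (f v) \<longleftrightarrow> E u v)"

definition proper_coloring :: "'v set \<Rightarrow> ('v \<Rightarrow> 'v \<Rightarrow> bool) \<Rightarrow> ('v \<Rightarrow> nat) \<Rightarrow> bool" where
  "proper_coloring V E c \<longleftrightarrow> (\<forall>u\<in>V. \<forall>v\<in>V. E u v \<longrightarrow> c u \<noteq> c v)"

definition distinguishing :: "'v set \<Rightarrow> ('v \<Rightarrow> 'v \<Rightarrow> bool) \<Rightarrow> ('v \<Rightarrow> nat) \<Rightarrow> bool" where
  "distinguishing V E c \<longleftrightarrow>
     (\<forall>f. is_automorphism V E f \<and> (\<forall>i. f ` {v\<in>V. c v = i} = {v\<in>V. c v = i})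
          \<longrightarrow> (\<forall>v\<in>V. f v = v))"

definition chi_D :: "'v set \<Rightarrow> ('v \<Rightarrow> 'v \<Rightarrow> bool) \<Rightarrow> nat" where
  "chi_D V E = (LEAST m. \<exists>c. c ` V \<subseteq> {..<m} \<and> proper_coloring V E c \<and> distinguishing V E c)"

definition LG1_V :: "nat \<Rightarrow> nat \<Rightarrow> (nat set + nat set) set" where
  "LG1_V k n = Inl ` {A. A \<subseteq> {1..n} \<and> card A = k - 1} \<union> Inr ` {B. B \<subseteq> {1..n} \<and> card B = k}"

fun LG1_E :: "(nat set + nat set) \<Rightarrow> (nat set + nat set) \<Rightarrow> bool" where
  "LG1_E (Inl A) (Inr B) = (A \<subset> B)"
| "LG1_E (Inr B) (Inl A) = (A \<subset> B)"
| "LG1_E _ _ = False"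

end

theory Submission
  imports Defs "HOL-Combinatorics.Transposition"
begin

text \<open>
  Two colours are too few: the transposition of 1 and 2 induces an automorphism of
  \<open>LG\<^sub>1(k,n)\<close>, and every set it moves has a neighbour that it fixes (add the missing, or remove
  the present, element of \<open>{1, 2}\<close>). In a proper 2-colouring this common neighbour forces a set
  and its image to have the same colour, so the transposition preserves every colour class.

  Three colours suffice. Write \<open>k = t + 2\<close> and \<open>n = N + t\<close>, call \<open>T = {N+1..N+t}\<close> the tail
  and fix an asymmetric graph on \<open>{1..N}\<close>, the \<open>N\<close>-cycle with the chords 13 and 14. All
  \<open>(k-1)\<close>-sets get one colour; a \<open>k\<close>-set gets a second colour if it is marked, i.e. of the
  form \<open>T \<union> e\<close> for an edge \<open>e\<close> of the base graph, or a gadget \<open>(T - {i}) \<union> Y\<^sub>i\<close> with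
  \<open>i \<in> T\<close> and \<open>Y\<^sub>i\<close> an independent triple; the other \<open>k\<close>-sets get the third colour. A
  colour-preserving automorphism respects the two levels, inclusion and marking. The
  \<open>(k-1)\<close>-sets containing \<open>T\<close> are exactly those lying in two marked sets, so the automorphism
  permutes them and thereby induces an automorphism of the base graph, which is trivial. Hence
  it fixes all sets \<open>T \<union> {a}\<close> and \<open>T \<union> {a, b}\<close>; the gadgets then fix the \<open>(k-1)\<close>-sets
  missing one element of \<open>T\<close>, and induction on \<open>|T - A|\<close> fixes every \<open>(k-1)\<close>-set \<open>A\<close>, hence
  every \<open>k\<close>-set.
\<close>

section \<open>Distinguishing colourings of abstract graphs\<close>

lemma colour_preserved_if_classes_preserved:
  assumes "\<forall>i. f ` {v \<in> V. c v = i} = {v \<in> V. c v = i}" and "v \<in> V"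
  shows "c (f v) = c v"
proof -
  have "f v \<in> f ` {w \<in> V. c w = c v}" using assms(2) by blast
  then show ?thesis using assms(1) by blast
qed

lemma classes_preserved_if_colour_preserved:
  assumes "bij_betw f V V" and "\<And>v. v \<in> V \<Longrightarrow> c (f v) = c v"
  shows "f ` {v \<in> V. c v = i} = {v \<in> V. c v = i}"
proof
  show "f ` {v \<in> V. c v = i} \<subseteq> {v \<in> V. c v = i}"
    using assms bij_betw_apply by fastforce
  show "{v \<in> V. c v = i} \<subseteq> f ` {v \<in> V. c v = i}"
  proof
    fix v assume v: "v \<in> {v \<in> V. c v = i}"
    then obtain w where "w \<in> V" "v = f w"
      using assms(1) by (metis (no_types, lifting) bij_betw_imp_surj_on imageE mem_Collect_eq)
    then show "v \<in> f ` {v \<in> V. c v = i}" using v assms(2) by auto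
  qed
qed

text \<open>With two colours, a vertex and its image share a colour as soon as they have a common
  neighbour.\<close>
lemma two_colouring_not_distinguishing:
  assumes aut: "is_automorphism V E g"
    and moved: "v\<^sub>0 \<in> V" "g v\<^sub>0 \<noteq> v\<^sub>0"
    and common: "\<And>v. v \<in> V \<Longrightarrow> g v \<noteq> v \<Longrightarrow> \<exists>u\<in>V. E u v \<and> E u (g v)"
    and two: "c ` V \<subseteq> {..<2}" and proper: "proper_coloring V E c"
  shows "\<not> distinguishing V E c"
proof
  have bij: "bij_betw g V V" using aut by (simp add: is_automorphism_def)
  have "c (g v) = c v" if v: "v \<in> V" for v
  proof (cases "g v = v")
    case False
    then obtain u where u: "u \<in> V" "E u v" "E u (g v)" using common v by blast
    have "c u \<noteq> c v" "c u \<noteq> c (g v)"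
      using proper u v bij_betw_apply[OF bij v] unfolding proper_coloring_def by blast+
    moreover have "c u < 2" "c v < 2" "c (g v) < 2"
      using two u v bij_betw_apply[OF bij v] by auto
    ultimately show ?thesis by simp
  qed simp
  then have "g ` {v \<in> V. c v = i} = {v \<in> V. c v = i}" for i
    by (rule classes_preserved_if_colour_preserved[OF bij])
  moreover assume "distinguishing V E c"
  ultimately have "\<forall>v\<in>V. g v = v" using aut unfolding distinguishing_def by blast
  then show False using moved by blast
qed

lemma chi_D_eqI:
  assumes "c ` V \<subseteq> {..<m}" "proper_coloring V E c" "distinguishing V E c"
    and "\<And>c l. l < m \<Longrightarrow> c ` V \<subseteq> {..<l} \<Longrightarrow> proper_coloring V E c \<Longrightarrow> \<not> distinguishing V E c"
  shows "chi_D V E = m"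
  unfolding chi_D_def
proof (rule Least_equality)
  show "\<exists>c. c ` V \<subseteq> {..<m} \<and> proper_coloring V E c \<and> distinguishing V E c"
    using assms(1-3) by blast
  show "m \<le> l" if "\<exists>c. c ` V \<subseteq> {..<l} \<and> proper_coloring V E c \<and> distinguishing V E c" for l
    using that assms(4) not_le by blast
qed

section \<open>Two colours do not suffice for \<open>LG\<^sub>1(k,n)\<close>\<close>

lemma Inl_mem_LG1_V: "Inl A \<in> LG1_V k n \<longleftrightarrow> A \<subseteq> {1..n} \<and> card A = k - 1"
  unfolding LG1_V_def by auto

lemma Inr_mem_LG1_V: "Inr B \<in> LG1_V k n \<longleftrightarrow> B \<subseteq> {1..n} \<and> card B = k"
  unfolding LG1_V_def by auto

lemma LG1_V_cases:
  assumes "v \<in> LG1_V k n"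
  obtains (lower) A where "v = Inl A" "A \<subseteq> {1..n}" "card A = k - 1"
    | (upper) B where "v = Inr B" "B \<subseteq> {1..n}" "card B = k"
  using assms unfolding LG1_V_def by blast

lemma LG1_E_map_sum_image:
  assumes "inj \<pi>"
  shows "LG1_E (map_sum ((`) \<pi>) ((`) \<pi>) u) (map_sum ((`) \<pi>) ((`) \<pi>) v) = LG1_E u v"
proof -
  have "\<pi> ` A \<subset> \<pi> ` B \<longleftrightarrow> A \<subset> B" for A B
    using inj_image_subset_iff[OF assms] inj_image_eq_iff[OF assms] by blast
  then show ?thesis by (cases u; cases v) auto
qed

lemma LG1_automorphism_of_permutation:
  assumes "bij \<pi>" and "\<pi> ` {1..n} = {1..n}"
  shows "is_automorphism (LG1_V k n) LG1_E (map_sum ((`) \<pi>) ((`) \<pi>))"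
proof -
  let ?g = "map_sum ((`) \<pi>) ((`) \<pi>)" and ?h = "map_sum ((`) (inv \<pi>)) ((`) (inv \<pi>))"
  have inj: "inj \<pi>" "inj (inv \<pi>)" using assms(1) bij_imp_bij_inv bij_is_inj by blast+
  have inv_range: "inv \<pi> ` {1..n} = {1..n}"
    using assms by (metis bij_is_inj image_inv_f_f)
  have maps: "map_sum ((`) p) ((`) p) v \<in> LG1_V k n"
    if "inj p" "p ` {1..n} = {1..n}" "v \<in> LG1_V k n" for p v
    using that(3)
  proof (cases rule: LG1_V_cases)
    case (lower A)
    then show ?thesis using that(1,2) by (auto simp: Inl_mem_LG1_V card_image inj_on_subset)
  next
    case (upper B)
    then show ?thesis using that(1,2) by (auto simp: Inr_mem_LG1_V card_image inj_on_subset)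
  qed
  have "?h (?g v) = v" "?g (?h v) = v" for v
    using assms(1) by (cases v; simp add: image_image bij_is_inj bij_is_surj surj_f_inv_f)+
  then have "bij_betw ?g (LG1_V k n) (LG1_V k n)"
    using maps[OF inj(1) assms(2)] maps[OF inj(2) inv_range]
    by (intro bij_betw_byWitness[of _ ?h]) auto
  then show ?thesis
    unfolding is_automorphism_def using LG1_E_map_sum_image[OF inj(1)] by blast
qed

text \<open>Adding the missing one of \<open>a, b\<close>, or removing the present one, gives a neighbour
  fixed by the transposition.\<close>
lemma LG1_neighbour_fixed_by_transpose:
  assumes "a \<in> {1..n}" "b \<in> {1..n}" "2 \<le> k" and v: "v \<in> LG1_V k n"
    and moved: "map_sum ((`) (transpose a b)) ((`) (transpose a b)) v \<noteq> v"
  shows "\<exists>u\<in>LG1_V k n. LG1_E u v \<and> map_sum ((`) (transpose a b)) ((`) (transpose a b)) u = u"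
  using v
proof (cases rule: LG1_V_cases)
  case (lower A)
  let ?B = "insert a (insert b A)"
  have one: "(a \<in> A) \<noteq> (b \<in> A)" using moved lower by (metis map_sum.simps(1) transpose_image_eq)
  have "finite A" using lower finite_subset by blast
  then have "card ?B = k" using lower one assms(3) by (auto simp: card_insert_if)
  then have "Inr ?B \<in> LG1_V k n" using lower assms(1,2) by (simp add: Inr_mem_LG1_V)
  moreover have "LG1_E (Inr ?B) v" using lower one by auto
  moreover have "transpose a b ` ?B = ?B" by (rule transpose_image_eq) simp
  ultimately show ?thesis by auto
next
  case (upper B)
  let ?A = "B - {a, b}"
  have one: "(a \<in> B) \<noteq> (b \<in> B)" using moved upper by (metis map_sum.simps(2) transpose_image_eq)
  have "finite B" using upper finite_subset by blast
  then have "card ?A = k - 1" using upper one by (auto simp: card_Diff_subset_Int)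
  then have "Inl ?A \<in> LG1_V k n" using upper by (auto simp: Inl_mem_LG1_V)
  moreover have "LG1_E (Inl ?A) v" using upper one by auto
  moreover have "transpose a b ` ?A = ?A" by (rule transpose_image_eq) simp
  ultimately show ?thesis by auto
qed

lemma LG1_two_colourings_not_distinguishing:
  assumes "2 \<le> k" "k \<le> n"
    and "c ` LG1_V k n \<subseteq> {..<2}" "proper_coloring (LG1_V k n) LG1_E c"
  shows "\<not> distinguishing (LG1_V k n) LG1_E c"
proof -
  let ?g = "map_sum ((`) (transpose (1::nat) 2)) ((`) (transpose 1 2))"
  have aut: "is_automorphism (LG1_V k n) LG1_E ?g"
    using assms(1,2) by (intro LG1_automorphism_of_permutation) auto
  have "\<exists>u\<in>LG1_V k n. LG1_E u v \<and> LG1_E u (?g v)" if v: "v \<in> LG1_V k n" "?g v \<noteq> v" for v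
  proof -
    obtain u where u: "u \<in> LG1_V k n" "LG1_E u v" "?g u = u"
      using LG1_neighbour_fixed_by_transpose[of 1 n 2 k v] assms(1,2) v by auto
    have "LG1_E (?g u) (?g v) = LG1_E u v"
      using aut u(1) v(1) unfolding is_automorphism_def by blast
    then show ?thesis using u by auto
  qed
  moreover have "Inl (insert 1 {3..k}) \<in> LG1_V k n"
    using assms(1,2) by (auto simp: Inl_mem_LG1_V)
  moreover have "?g (Inl (insert 1 {3..k})) \<noteq> Inl (insert 1 {3..k})"
  proof -
    have "2 \<in> transpose 1 2 ` insert 1 {3..k}" by (rule image_eqI[of _ _ 1]) simp_all
    moreover have "2 \<notin> insert (1::nat) {3..k}" by simp
    ultimately show ?thesis by (metis map_sum.simps(1) sum.inject(1))
  qed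
  ultimately show ?thesis
    using two_colouring_not_distinguishing[OF aut _ _ _ assms(3,4)] by blast
qed

section \<open>An asymmetric base graph\<close>

definition base_adj :: "nat \<Rightarrow> nat \<Rightarrow> nat \<Rightarrow> bool" where
  "base_adj N x y \<longleftrightarrow> x \<in> {1..N} \<and> y \<in> {1..N} \<and>
     (y = Suc x \<or> x = Suc y \<or> {x, y} = {1, N} \<or> {x, y} = {1, 3} \<or> {x, y} = {1, 4})"

definition base_nbrs :: "nat \<Rightarrow> nat \<Rightarrow> nat set" where
  "base_nbrs N x = {y. base_adj N x y}"

lemma base_adj_sym: "base_adj N x y \<longleftrightarrow> base_adj N y x"
  unfolding base_adj_def by (auto simp: insert_commute)

lemma base_adj_irrefl: "6 \<le> N \<Longrightarrow> \<not> base_adj N x x"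
  by (auto simp: base_adj_def)

lemma base_adj_range: "base_adj N x y \<Longrightarrow> x \<in> {1..N} \<and> y \<in> {1..N}"
  by (simp add: base_adj_def)

lemma base_nbrs_1: "6 \<le> N \<Longrightarrow> base_nbrs N 1 = {2, 3, 4, N}"
  unfolding base_nbrs_def base_adj_def by (auto simp: doubleton_eq_iff)

lemma base_nbrs_2: "6 \<le> N \<Longrightarrow> base_nbrs N 2 = {1, 3}"
  unfolding base_nbrs_def base_adj_def by (auto simp: doubleton_eq_iff)

lemma base_nbrs_3: "6 \<le> N \<Longrightarrow> base_nbrs N 3 = {1, 2, 4}"
  unfolding base_nbrs_def base_adj_def by (auto simp: doubleton_eq_iff)

lemma base_nbrs_4: "6 \<le> N \<Longrightarrow> base_nbrs N 4 = {1, 3, 5}"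
  unfolding base_nbrs_def base_adj_def by (auto simp: doubleton_eq_iff)

lemma base_nbrs_last: "6 \<le> N \<Longrightarrow> base_nbrs N N = {1, N - 1}"
  unfolding base_nbrs_def base_adj_def by (auto simp: doubleton_eq_iff)

lemma base_nbrs_subset: "x \<noteq> 1 \<Longrightarrow> base_nbrs N x \<subseteq> {1, x - 1, x + 1}"
  unfolding base_nbrs_def base_adj_def by (auto simp: doubleton_eq_iff)

lemma card_base_nbrs_le: "x \<noteq> 1 \<Longrightarrow> card (base_nbrs N x) \<le> 3"
  using card_mono[OF _ base_nbrs_subset, of x N] card_insert_le[of "{x - 1, x + 1}" 1]
  by (simp add: card_insert_if split: if_splits)

lemma base_adj_two_nbrs:
  assumes "6 \<le> N" "a \<in> {1..N}"
  obtains b c where "b \<noteq> c" "base_adj N a b" "base_adj N a c"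
proof -
  consider "a = 1" | "a = N" | "a \<noteq> 1" "a \<noteq> N" by blast
  then show ?thesis
  proof cases
    case 1
    then show ?thesis using assms by (intro that[of 2 N]) (auto simp: base_adj_def)
  next
    case 2
    then show ?thesis using assms by (intro that[of "N - 1" 1]) (auto simp: base_adj_def)
  next
    case 3
    then show ?thesis using assms by (intro that[of "a - 1" "a + 1"]) (auto simp: base_adj_def)
  qed
qed

locale base_automorphism =
  fixes N :: nat and \<sigma> :: "nat \<Rightarrow> nat"
  assumes six: "6 \<le> N"
    and bij: "bij_betw \<sigma> {1..N} {1..N}"
    and adj: "\<And>x y. x \<in> {1..N} \<Longrightarrow> y \<in> {1..N} \<Longrightarrow> base_adj N (\<sigma> x) (\<sigma> y) \<longleftrightarrow> base_adj N x y"
begin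

lemma eq_iff: "x \<in> {1..N} \<Longrightarrow> y \<in> {1..N} \<Longrightarrow> \<sigma> x = \<sigma> y \<longleftrightarrow> x = y"
  using bij by (auto simp: bij_betw_def inj_on_eq_iff)

lemma image_base_nbrs:
  assumes x: "x \<in> {1..N}"
  shows "\<sigma> ` base_nbrs N x = base_nbrs N (\<sigma> x)"
proof
  show "\<sigma> ` base_nbrs N x \<subseteq> base_nbrs N (\<sigma> x)"
  proof
    fix y assume "y \<in> \<sigma> ` base_nbrs N x"
    then obtain z where "base_adj N x z" "y = \<sigma> z" unfolding base_nbrs_def by blast
    then show "y \<in> base_nbrs N (\<sigma> x)" using adj[OF x] base_adj_range unfolding base_nbrs_def
      by blast
  qed
  show "base_nbrs N (\<sigma> x) \<subseteq> \<sigma> ` base_nbrs N x"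
  proof
    fix y assume y: "y \<in> base_nbrs N (\<sigma> x)"
    then have "y \<in> \<sigma> ` {1..N}"
      using bij base_adj_range unfolding bij_betw_def base_nbrs_def by blast
    then obtain z where "z \<in> {1..N}" "y = \<sigma> z" by blast
    with y adj[OF x] show "y \<in> \<sigma> ` base_nbrs N x" unfolding base_nbrs_def by blast
  qed
qed

lemma card_base_nbrs:
  assumes "x \<in> {1..N}"
  shows "card (base_nbrs N (\<sigma> x)) = card (base_nbrs N x)"
proof -
  have "base_nbrs N x \<subseteq> {1..N}" using base_adj_range unfolding base_nbrs_def by blast
  then have "inj_on \<sigma> (base_nbrs N x)" using bij by (metis bij_betw_def inj_on_subset)
  then show ?thesis using image_base_nbrs[OF assms] card_image by metis
qed

text \<open>The vertex 1 is the only one of degree 4.\<close>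
lemma fixes_1: "\<sigma> 1 = 1"
proof (rule ccontr)
  assume "\<sigma> 1 \<noteq> 1"
  then have "card (base_nbrs N (\<sigma> 1)) \<le> 3" by (rule card_base_nbrs_le)
  then show False using card_base_nbrs[of 1] base_nbrs_1[OF six] six by simp
qed

text \<open>Among the neighbours of 1, exactly 3 and 4 have degree 3; the neighbour 5 of 4 is not
  adjacent to 1, whereas the neighbour 2 of 3 is.\<close>
lemma fixes_3_4: "\<sigma> 3 = 3 \<and> \<sigma> 4 = 4"
proof -
  have in_range: "1 \<in> {1..N}" "3 \<in> {1..N}" "4 \<in> {1..N}" "5 \<in> {1..N}" using six by auto
  have "\<sigma> 3 \<in> \<sigma> ` base_nbrs N 1" "\<sigma> 4 \<in> \<sigma> ` base_nbrs N 1"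
    unfolding base_nbrs_1[OF six] by simp_all
  then have "\<sigma> 3 \<in> base_nbrs N 1" "\<sigma> 4 \<in> base_nbrs N 1"
    using image_base_nbrs[OF in_range(1)] fixes_1 by simp_all
  moreover have "\<sigma> 3 \<notin> {2, N}" "\<sigma> 4 \<notin> {2, N}"
    using card_base_nbrs[of 3] card_base_nbrs[of 4] six
    by (auto simp: base_nbrs_2 base_nbrs_3 base_nbrs_4 base_nbrs_last)
  ultimately have in_3_4: "\<sigma> 3 \<in> {3, 4}" "\<sigma> 4 \<in> {3, 4}"
    unfolding base_nbrs_1[OF six] by auto
  have ne: "\<sigma> 3 \<noteq> \<sigma> 4" using eq_iff in_range by auto
  have "\<sigma> 4 \<noteq> 3"
  proof
    assume "\<sigma> 4 = 3"
    then have "\<sigma> 3 = 4" using in_3_4 ne by auto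
    have "\<sigma> 5 \<in> base_nbrs N 3"
      using image_base_nbrs[OF in_range(3)] \<open>\<sigma> 4 = 3\<close> unfolding base_nbrs_4[OF six] by auto
    moreover have "\<sigma> 5 \<noteq> \<sigma> 1" "\<sigma> 5 \<noteq> \<sigma> 3" using eq_iff in_range by auto
    ultimately have "\<sigma> 5 = 2"
      using fixes_1 \<open>\<sigma> 3 = 4\<close> \<open>\<sigma> 4 = 3\<close> unfolding base_nbrs_3[OF six] by auto
    then have "base_adj N (\<sigma> 1) (\<sigma> 5)" using fixes_1 six by (simp add: base_adj_def)
    then show False using adj in_range six by (auto simp: base_adj_def doubleton_eq_iff)
  qed
  then show ?thesis using in_3_4 ne by auto
qed

lemma fixes_2: "\<sigma> 2 = 2"
proof -
  have "\<sigma> 2 \<in> base_nbrs N 3" using image_base_nbrs[of 3] fixes_3_4 six by (auto simp: base_nbrs_3)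
  moreover have "\<sigma> 2 \<noteq> \<sigma> 1" "\<sigma> 2 \<noteq> \<sigma> 4" using eq_iff six by auto
  ultimately show ?thesis using fixes_1 fixes_3_4 six by (auto simp: base_nbrs_3)
qed

lemma fixes_from_4: "4 \<le> j \<Longrightarrow> j \<le> N \<Longrightarrow> \<sigma> j = j \<and> \<sigma> (j - 1) = j - 1"
proof (induction j rule: nat_induct_at_least)
  case base
  then show ?case using fixes_3_4 by simp
next
  case (Suc j)
  then have IH: "\<sigma> j = j" "\<sigma> (j - 1) = j - 1" by auto
  have "Suc j \<in> {1..N}" "j - 1 \<in> {1..N}" "(1::nat) \<in> {1..N}" using Suc by auto
  then have ne: "\<sigma> (Suc j) \<noteq> \<sigma> 1" "\<sigma> (Suc j) \<noteq> \<sigma> (j - 1)" using eq_iff by auto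
  have "Suc j \<in> base_nbrs N j" using Suc unfolding base_nbrs_def base_adj_def by auto
  then have "\<sigma> (Suc j) \<in> base_nbrs N j" using image_base_nbrs[of j] IH Suc by auto
  then have "\<sigma> (Suc j) \<in> {1, j - 1, j + 1}" using base_nbrs_subset[of j N] Suc by auto
  then show ?case using IH ne fixes_1 by auto
qed

lemma id_on: "x \<in> {1..N} \<Longrightarrow> \<sigma> x = x"
proof -
  assume "x \<in> {1..N}"
  then consider "x = 1" | "x = 2" | "x = 3" | "4 \<le> x" "x \<le> N" by force
  then show ?thesis using fixes_1 fixes_2 fixes_3_4 fixes_from_4[of x] by cases simp_all
qed

end

section \<open>The marked family\<close>

locale lg_construction =
  fixes N t :: nat
  assumes six: "6 \<le> N" and room: "t + 5 \<le> N"
begin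

definition tail :: "nat set" where
  "tail = {N<..N + t}"

definition lower_set :: "nat set \<Rightarrow> bool" where
  "lower_set A \<longleftrightarrow> A \<subseteq> {1..N + t} \<and> card A = t + 1"

definition upper_set :: "nat set \<Rightarrow> bool" where
  "upper_set B \<longleftrightarrow> B \<subseteq> {1..N + t} \<and> card B = t + 2"

text \<open>For \<open>i \<in> tail\<close> the third element \<open>i - N + 5\<close> runs injectively through \<open>{6..t + 5}\<close>, so
  the gadgets are distinct independent sets of the base graph.\<close>
definition gadget :: "nat \<Rightarrow> nat set" where
  "gadget i = {2, 4, i - N + 5}"

definition marked :: "nat set \<Rightarrow> bool" where
  "marked B \<longleftrightarrow> (\<exists>a b. base_adj N a b \<and> B = tail \<union> {a, b}) \<or> (\<exists>i\<in>tail. B = (tail - {i}) \<union> gadget i)"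

definition colouring :: "nat set + nat set \<Rightarrow> nat" where
  "colouring v = (case v of Inl _ \<Rightarrow> 2 | Inr B \<Rightarrow> if marked B then 1 else 0)"

lemma finite_tail [simp]: "finite tail"
  by (simp add: tail_def)

lemma card_tail [simp]: "card tail = t"
  by (simp add: tail_def)

lemma tail_not_base: "x \<in> tail \<Longrightarrow> x \<notin> {1..N}"
  by (auto simp: tail_def)

lemma tail_subset: "tail \<subseteq> {1..N + t}"
  by (auto simp: tail_def)

lemma base_if_not_tail: "x \<in> {1..N + t} \<Longrightarrow> x \<notin> tail \<Longrightarrow> x \<in> {1..N}"
  by (auto simp: tail_def)

lemma card_tail_Un:
  assumes "S \<subseteq> {1..N}"
  shows "card (tail \<union> S) = t + card S"
proof -
  have "tail \<inter> S = {}" using assms tail_not_base by blast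
  moreover have "finite S" using assms finite_subset by blast
  ultimately show ?thesis by (simp add: card_Un_disjoint)
qed

lemma card_tail_Diff_Un:
  assumes "i \<in> tail" "S \<subseteq> {1..N}"
  shows "card ((tail - {i}) \<union> S) = (t - 1) + card S"
proof -
  have "(tail - {i}) \<inter> S = {}" using assms tail_not_base by blast
  moreover have "finite S" using assms finite_subset by blast
  ultimately show ?thesis using assms(1) by (simp add: card_Un_disjoint)
qed

lemma gadget_subset: "i \<in> tail \<Longrightarrow> gadget i \<subseteq> {1..N}"
  using room by (auto simp: gadget_def tail_def)

lemma card_gadget: "i \<in> tail \<Longrightarrow> card (gadget i) = 3"
  by (auto simp: gadget_def tail_def)

lemma gadget_inj: "i \<in> tail \<Longrightarrow> j \<in> tail \<Longrightarrow> gadget i = gadget j \<Longrightarrow> i = j"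
  by (auto simp: gadget_def tail_def doubleton_eq_iff insert_eq_iff)

lemma gadget_independent: "i \<in> tail \<Longrightarrow> a \<in> gadget i \<Longrightarrow> b \<in> gadget i \<Longrightarrow> \<not> base_adj N a b"
  using six by (auto simp: gadget_def tail_def base_adj_def doubleton_eq_iff)

lemma not_mem_gadget: "i \<in> tail \<Longrightarrow> i \<notin> gadget i"
  using gadget_subset tail_not_base by blast

lemma lower_set_finite: "lower_set A \<Longrightarrow> finite A"
  unfolding lower_set_def by (auto intro: finite_subset)

lemma upper_set_finite: "upper_set B \<Longrightarrow> finite B"
  unfolding upper_set_def by (auto intro: finite_subset)

lemma lower_set_tail_insert: "a \<in> {1..N} \<Longrightarrow> lower_set (tail \<union> {a})"
  unfolding lower_set_def using card_tail_Un[of "{a}"] tail_subset by auto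

lemma upper_set_tail_pair:
  "a \<in> {1..N} \<Longrightarrow> b \<in> {1..N} \<Longrightarrow> a \<noteq> b \<Longrightarrow> upper_set (tail \<union> {a, b})"
  unfolding upper_set_def using card_tail_Un[of "{a, b}"] tail_subset by auto

lemma lower_set_near:
  "i \<in> tail \<Longrightarrow> a \<in> {1..N} \<Longrightarrow> b \<in> {1..N} \<Longrightarrow> a \<noteq> b \<Longrightarrow> lower_set ((tail - {i}) \<union> {a, b})"
  unfolding lower_set_def using card_tail_Diff_Un[of i "{a, b}"] tail_subset
  by (auto simp: tail_def)

lemma upper_set_near:
  "i \<in> tail \<Longrightarrow> a \<in> {1..N} \<Longrightarrow> b \<in> {1..N} \<Longrightarrow> c \<in> {1..N} \<Longrightarrow> a \<noteq> b \<Longrightarrow> a \<noteq> c \<Longrightarrow> b \<noteq> c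
   \<Longrightarrow> upper_set ((tail - {i}) \<union> {a, b, c})"
  unfolding upper_set_def using card_tail_Diff_Un[of i "{a, b, c}"] tail_subset
  by (auto simp: tail_def)

lemma upper_set_gadget: "i \<in> tail \<Longrightarrow> upper_set ((tail - {i}) \<union> gadget i)"
  unfolding upper_set_def
    using card_tail_Diff_Un[of i "gadget i"] gadget_subset[of i] card_gadget[of i] tail_subset
  by (auto simp: tail_def)

lemma upper_set_insert: "lower_set A \<Longrightarrow> j \<in> {1..N + t} \<Longrightarrow> j \<notin> A \<Longrightarrow> upper_set (insert j A)"
  unfolding lower_set_def upper_set_def by (auto dest: finite_subset[OF _ finite_atLeastAtMost])

lemma lower_eq_Int_uppers:
  assumes "upper_set B\<^sub>1" "upper_set B\<^sub>2" "B\<^sub>1 \<noteq> B\<^sub>2" "lower_set A" "A \<subseteq> B\<^sub>1" "A \<subseteq> B\<^sub>2"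
  shows "A = B\<^sub>1 \<inter> B\<^sub>2"
proof -
  have "B\<^sub>1 \<inter> B\<^sub>2 \<subset> B\<^sub>1"
    using assms(1-3) upper_set_finite card_subset_eq unfolding upper_set_def
    by (metis Int_lower1 Int_lower2 inf.absorb_iff1 psubsetI)
  then have "card (B\<^sub>1 \<inter> B\<^sub>2) < t + 2"
    using psubset_card_mono upper_set_finite[OF assms(1)] assms(1) unfolding upper_set_def by metis
  then show ?thesis using assms(4-6) upper_set_finite[OF assms(1)] unfolding lower_set_def
    by (intro card_seteq) auto
qed

lemma lower_set_tail_subset:
  assumes "lower_set A" "tail \<subseteq> A"
  obtains a where "a \<in> {1..N}" "A = tail \<union> {a}"
proof -
  have "card (A - tail) = 1" using assms lower_set_finite
    by (simp add: card_Diff_subset lower_set_def)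
  then obtain a where a: "A - tail = {a}" by (rule card_1_singletonE)
  then have "a \<in> {1..N}" using assms(1) base_if_not_tail unfolding lower_set_def by blast
  moreover have "A = tail \<union> {a}" using a assms(2) by auto
  ultimately show ?thesis by (rule that)
qed

lemma marked_tail_pair_iff:
  assumes "a \<in> {1..N}" "b \<in> {1..N}"
  shows "marked (tail \<union> {a, b}) \<longleftrightarrow> base_adj N a b"
proof
  assume "marked (tail \<union> {a, b})"
  then consider (edge) a' b' where "base_adj N a' b'" "tail \<union> {a, b} = tail \<union> {a', b'}"
    | (gadget) i where "i \<in> tail" "tail \<union> {a, b} = (tail - {i}) \<union> gadget i"
    unfolding marked_def by metis
  then show "base_adj N a b"
  proof cases
    case edge
    have "(tail \<union> {a, b}) \<inter> {1..N} = {a, b}" "(tail \<union> {a', b'}) \<inter> {1..N} = {a', b'}"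
      using assms base_adj_range[OF edge(1)] tail_not_base by auto
    then have "{a, b} = {a', b'}" using edge by simp
    then show ?thesis using edge(1) base_adj_sym by (metis doubleton_eq_iff)
  next
    case gadget
    have "i \<in> (tail - {i}) \<union> gadget i" unfolding gadget(2)[symmetric] using gadget(1) by blast
    then show ?thesis using not_mem_gadget[OF gadget(1)] by blast
  qed
next
  assume "base_adj N a b"
  then show "marked (tail \<union> {a, b})" unfolding marked_def by blast
qed

lemma lower_not_below_edge_and_gadget:
  assumes "lower_set A" "base_adj N a b" "i \<in> tail"
    and "A \<subseteq> tail \<union> {a, b}" "A \<subseteq> (tail - {i}) \<union> gadget i"
  shows False
proof -
  have ab: "a \<in> {1..N}" "b \<in> {1..N}" using base_adj_range assms(2) by auto
  have "A \<subseteq> (tail - {i}) \<union> ({a, b} \<inter> gadget i)"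
    using assms(4,5) gadget_subset[OF assms(3)] tail_not_base ab by blast
  then have "card A \<le> card ((tail - {i}) \<union> ({a, b} \<inter> gadget i))" by (intro card_mono) auto
  also have "\<dots> = (t - 1) + card ({a, b} \<inter> gadget i)"
    using card_tail_Diff_Un[OF assms(3), of "{a, b} \<inter> gadget i"] ab by fastforce
  finally have "t + 1 \<le> t - 1 + card ({a, b} \<inter> gadget i)" using assms(1)
    by (simp add: lower_set_def)
  moreover have "0 < t" using assms(3) by (auto simp: tail_def)
  ultimately have "2 \<le> card ({a, b} \<inter> gadget i)" by simp
  moreover have "card {a, b} \<le> 2" by (cases "a = b") auto
  ultimately have "{a, b} \<inter> gadget i = {a, b}" by (intro card_seteq) auto
  then show False using gadget_independent[OF assms(3)] assms(2) by blast
qed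

lemma lower_not_below_two_gadgets:
  assumes "lower_set A" "i \<in> tail" "j \<in> tail" "i \<noteq> j"
    and "A \<subseteq> (tail - {i}) \<union> gadget i" "A \<subseteq> (tail - {j}) \<union> gadget j"
  shows False
proof -
  have "\<not> gadget i \<subseteq> gadget j"
    using gadget_inj assms(2-4) card_subset_eq card_gadget
    by (metis finite_subset finite_atLeastAtMost gadget_subset)
  then have "gadget i \<inter> gadget j \<subset> gadget i" by blast
  then have "card (gadget i \<inter> gadget j) < card (gadget i)"
    by (intro psubset_card_mono) (simp_all add: gadget_def)
  then have "card (gadget i \<inter> gadget j) \<le> 2" using card_gadget[OF assms(2)] by simp
  have "A \<subseteq> (tail - {i, j}) \<union> (gadget i \<inter> gadget j)"
    using assms(5,6) gadget_subset assms(2,3) tail_not_base by blast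
  then have "card A \<le> card ((tail - {i, j}) \<union> (gadget i \<inter> gadget j))"
    by (intro card_mono) (auto simp: gadget_def)
  also have "\<dots> \<le> card (tail - {i, j}) + card (gadget i \<inter> gadget j)" by (rule card_Un_le)
  also have "card (tail - {i, j}) = t - 2" using assms(2-4) by (subst card_Diff_subset) auto
  finally have "t + 1 \<le> t - 2 + card (gadget i \<inter> gadget j)" using assms(1)
    by (simp add: lower_set_def)
  moreover have "2 \<le> t" using card_mono[of tail "{i, j}"] assms(2-4) by auto
  ultimately show False using \<open>card (gadget i \<inter> gadget j) \<le> 2\<close> by linarith
qed

definition below_two_marked :: "nat set \<Rightarrow> bool" where
  "below_two_marked A \<longleftrightarrow> (\<exists>B\<^sub>1 B\<^sub>2. upper_set B\<^sub>1 \<and> upper_set B\<^sub>2 \<and> B\<^sub>1 \<noteq> B\<^sub>2 \<and>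
     marked B\<^sub>1 \<and> marked B\<^sub>2 \<and> A \<subseteq> B\<^sub>1 \<and> A \<subseteq> B\<^sub>2)"

lemma below_two_marked_tail_insert:
  assumes "a \<in> {1..N}"
  shows "below_two_marked (tail \<union> {a})"
proof -
  obtain b c where bc: "b \<noteq> c" "base_adj N a b" "base_adj N a c"
    using base_adj_two_nbrs[OF six assms] .
  have "b \<in> {1..N}" "c \<in> {1..N}" "a \<noteq> b" "a \<noteq> c"
    using bc base_adj_range base_adj_irrefl[OF six] by metis+
  moreover have "tail \<union> {a, b} \<noteq> tail \<union> {a, c}"
    using calculation bc(1) tail_not_base by blast
  ultimately show ?thesis
    using upper_set_tail_pair assms bc unfolding below_two_marked_def marked_def by blast
qed

lemma tail_subset_if_below_two_marked:
  assumes "lower_set A" "below_two_marked A"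
  shows "tail \<subseteq> A"
proof -
  obtain B\<^sub>1 B\<^sub>2 where B: "upper_set B\<^sub>1" "upper_set B\<^sub>2" "B\<^sub>1 \<noteq> B\<^sub>2" "marked B\<^sub>1" "marked B\<^sub>2"
    "A \<subseteq> B\<^sub>1" "A \<subseteq> B\<^sub>2"
    using assms(2) unfolding below_two_marked_def by blast
  have A_eq: "A = B\<^sub>1 \<inter> B\<^sub>2" using lower_eq_Int_uppers B assms(1) by blast
  consider (edges) a b a' b' where "B\<^sub>1 = tail \<union> {a, b}" "B\<^sub>2 = tail \<union> {a', b'}"
    | (edge_gadget) a b i where "base_adj N a b" "i \<in> tail"
        "B\<^sub>1 = tail \<union> {a, b}" "B\<^sub>2 = (tail - {i}) \<union> gadget i"
    | (gadget_edge) a b i where "base_adj N a b" "i \<in> tail"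
        "B\<^sub>2 = tail \<union> {a, b}" "B\<^sub>1 = (tail - {i}) \<union> gadget i"
    | (gadgets) i j where "i \<in> tail" "j \<in> tail"
        "B\<^sub>1 = (tail - {i}) \<union> gadget i" "B\<^sub>2 = (tail - {j}) \<union> gadget j"
    using B(4,5) unfolding marked_def by metis
  then show "tail \<subseteq> A"
  proof cases
    case edges
    then show ?thesis using A_eq by blast
  next
    case edge_gadget
    then show ?thesis using lower_not_below_edge_and_gadget[OF assms(1)] B(6,7) by blast
  next
    case gadget_edge
    then show ?thesis using lower_not_below_edge_and_gadget[OF assms(1)] B(6,7) by blast
  next
    case gadgets
    then have "i \<noteq> j" using B(3) by blast
    then show ?thesis using lower_not_below_two_gadgets[OF assms(1) gadgets(1,2)] gadgets(3,4) B(6,7)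
      by blast
  qed
qed

lemma tail_subset_iff_below_two_marked: "lower_set A \<Longrightarrow> tail \<subseteq> A \<longleftrightarrow> below_two_marked A"
  using lower_set_tail_subset below_two_marked_tail_insert tail_subset_if_below_two_marked by metis

end

section \<open>Maps preserving inclusion and marking are trivial\<close>

locale marked_preserving_maps = lg_construction +
  fixes fL fR :: "nat set \<Rightarrow> nat set"
  assumes bij_lower: "bij_betw fL (Collect lower_set) (Collect lower_set)"
    and bij_upper: "bij_betw fR (Collect upper_set) (Collect upper_set)"
    and subset_iff: "lower_set A \<Longrightarrow> upper_set B \<Longrightarrow> fL A \<subseteq> fR B \<longleftrightarrow> A \<subseteq> B"
    and marked_iff: "upper_set B \<Longrightarrow> marked (fR B) \<longleftrightarrow> marked B"
begin

lemma lower_set_fL: "lower_set A \<Longrightarrow> lower_set (fL A)"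
  using bij_betw_apply[OF bij_lower] by simp

lemma upper_set_fR: "upper_set B \<Longrightarrow> upper_set (fR B)"
  using bij_betw_apply[OF bij_upper] by simp

lemma fL_eq_iff: "lower_set A \<Longrightarrow> lower_set A' \<Longrightarrow> fL A = fL A' \<longleftrightarrow> A = A'"
  using bij_lower by (auto simp: bij_betw_def inj_on_eq_iff)

lemma fR_eq_iff: "upper_set B \<Longrightarrow> upper_set B' \<Longrightarrow> fR B = fR B' \<longleftrightarrow> B = B'"
  using bij_upper by (auto simp: bij_betw_def inj_on_eq_iff)

lemma fL_surj:
  assumes "lower_set A'"
  obtains A where "lower_set A" "fL A = A'"
  using assms bij_betw_imp_surj_on[OF bij_lower] by (metis imageE mem_Collect_eq)

lemma fR_surj:
  assumes "upper_set B'"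
  obtains B where "upper_set B" "fR B = B'"
  using assms bij_betw_imp_surj_on[OF bij_upper] by (metis imageE mem_Collect_eq)

text \<open>An upper set is the union of any two distinct lower sets below it, and a lower set is the
  intersection of any two distinct upper sets above it; so fixed points propagate between the
  levels.\<close>
lemma fR_fixed_if_two_fixed_below:
  assumes "lower_set A\<^sub>1" "lower_set A\<^sub>2" "A\<^sub>1 \<noteq> A\<^sub>2" "A\<^sub>1 \<subseteq> B" "A\<^sub>2 \<subseteq> B" "upper_set B"
    and "fL A\<^sub>1 = A\<^sub>1" "fL A\<^sub>2 = A\<^sub>2"
  shows "fR B = B"
proof -
  have "A\<^sub>1 \<union> A\<^sub>2 \<subseteq> fR B" using subset_iff assms by (metis Un_least)
  have "A\<^sub>1 \<subset> A\<^sub>1 \<union> A\<^sub>2"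
    using assms(1-3) card_subset_eq lower_set_finite unfolding lower_set_def
    by (metis Un_upper1 Un_upper2 psubsetI sup.absorb_iff1)
  then have "card A\<^sub>1 < card (A\<^sub>1 \<union> A\<^sub>2)"
    using assms upper_set_finite by (intro psubset_card_mono) (auto intro: finite_subset)
  then have "card B \<le> card (A\<^sub>1 \<union> A\<^sub>2)" using assms(1,6) by (simp add: lower_set_def upper_set_def)
  then have "A\<^sub>1 \<union> A\<^sub>2 = B" using assms(4-6) upper_set_finite by (intro card_seteq) auto
  then have "B \<subseteq> fR B" using \<open>A\<^sub>1 \<union> A\<^sub>2 \<subseteq> fR B\<close> by simp
  moreover have "card (fR B) \<le> card B" using upper_set_fR[OF assms(6)] assms(6)
    by (simp add: upper_set_def)
  ultimately show ?thesis using upper_set_finite[OF upper_set_fR[OF assms(6)]] by (metis card_seteq)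
qed

lemma fL_fixed_if_two_fixed_above:
  assumes "upper_set B\<^sub>1" "upper_set B\<^sub>2" "B\<^sub>1 \<noteq> B\<^sub>2" "lower_set A" "A \<subseteq> B\<^sub>1" "A \<subseteq> B\<^sub>2"
    and "fR B\<^sub>1 = B\<^sub>1" "fR B\<^sub>2 = B\<^sub>2"
  shows "fL A = A"
proof -
  have "fL A \<subseteq> B\<^sub>1 \<inter> B\<^sub>2" using subset_iff assms by (metis Int_greatest)
  then have "fL A \<subseteq> A" using lower_eq_Int_uppers assms(1-6) by blast
  moreover have "card A \<le> card (fL A)" using lower_set_fL[OF assms(4)] assms(4)
    by (simp add: lower_set_def)
  ultimately show ?thesis using card_seteq lower_set_finite[OF assms(4)] by blast
qed

lemma below_two_marked_fL_iff:
  assumes "lower_set A"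
  shows "below_two_marked (fL A) \<longleftrightarrow> below_two_marked A"
proof
  assume "below_two_marked A"
  then obtain B\<^sub>1 B\<^sub>2 where B: "upper_set B\<^sub>1" "upper_set B\<^sub>2" "B\<^sub>1 \<noteq> B\<^sub>2" "marked B\<^sub>1" "marked B\<^sub>2"
    "A \<subseteq> B\<^sub>1" "A \<subseteq> B\<^sub>2"
    unfolding below_two_marked_def by blast
  have "fR B\<^sub>1 \<noteq> fR B\<^sub>2" using fR_eq_iff B by blast
  moreover have "marked (fR B\<^sub>1)" "marked (fR B\<^sub>2)" using marked_iff B by auto
  moreover have "fL A \<subseteq> fR B\<^sub>1" "fL A \<subseteq> fR B\<^sub>2" using subset_iff assms B by auto
  ultimately show "below_two_marked (fL A)"
    using upper_set_fR B(1,2) unfolding below_two_marked_def by blast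
next
  assume "below_two_marked (fL A)"
  then obtain B\<^sub>1 B\<^sub>2 where B: "upper_set B\<^sub>1" "upper_set B\<^sub>2" "B\<^sub>1 \<noteq> B\<^sub>2" "marked B\<^sub>1" "marked B\<^sub>2"
    "fL A \<subseteq> B\<^sub>1" "fL A \<subseteq> B\<^sub>2"
    unfolding below_two_marked_def by blast
  obtain C\<^sub>1 where C\<^sub>1: "upper_set C\<^sub>1" "fR C\<^sub>1 = B\<^sub>1" using fR_surj B(1) by blast
  obtain C\<^sub>2 where C\<^sub>2: "upper_set C\<^sub>2" "fR C\<^sub>2 = B\<^sub>2" using fR_surj B(2) by blast
  have "C\<^sub>1 \<noteq> C\<^sub>2" using C\<^sub>1 C\<^sub>2 B(3) by auto
  moreover have "marked C\<^sub>1" "marked C\<^sub>2" using marked_iff C\<^sub>1 C\<^sub>2 B by auto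
  moreover have "A \<subseteq> C\<^sub>1" "A \<subseteq> C\<^sub>2" using subset_iff assms C\<^sub>1 C\<^sub>2 B by auto
  ultimately show "below_two_marked A" using C\<^sub>1 C\<^sub>2 unfolding below_two_marked_def by blast
qed

lemma tail_subset_fL_iff: "lower_set A \<Longrightarrow> tail \<subseteq> fL A \<longleftrightarrow> tail \<subseteq> A"
  using tail_subset_iff_below_two_marked below_two_marked_fL_iff lower_set_fL by metis

text \<open>Removing a suitable element of \<open>fR B\<close> outside the tail gives an image \<open>fL A\<close> with
  \<open>tail \<subseteq> A \<subseteq> B\<close>.\<close>
lemma tail_subset_if_tail_subset_fR:
  assumes "upper_set B" "tail \<subseteq> fR B"
  shows "tail \<subseteq> B"
proof -
  have up: "upper_set (fR B)" using upper_set_fR assms(1) .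
  have "card (fR B - tail) = 2" using assms(2) up upper_set_finite
    by (simp add: card_Diff_subset upper_set_def)
  then obtain b where b: "b \<in> fR B" "b \<notin> tail" by (metis card_2_iff Diff_iff insertI1)
  have "lower_set (fR B - {b})"
    using up b upper_set_finite unfolding lower_set_def upper_set_def
    by (auto simp: card_Diff_singleton)
  then obtain A where A: "lower_set A" "fL A = fR B - {b}" using fL_surj by blast
  have "tail \<subseteq> A" using tail_subset_fL_iff[OF A(1)] A(2) assms(2) b by auto
  moreover have "A \<subseteq> B" using subset_iff[OF A(1) assms(1)] A(2) by auto
  ultimately show ?thesis by simp
qed

text \<open>By \<open>tail_subset_fL_iff\<close>, \<open>fL\<close> permutes the sets \<open>tail \<union> {a}\<close>; this induces a map on the
  base vertices.\<close>
definition base_point :: "nat \<Rightarrow> nat" where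
  "base_point a = the_elem (fL (tail \<union> {a}) - tail)"

lemma fL_tail_insert_eq:
  assumes "a \<in> {1..N}"
  shows "base_point a \<in> {1..N} \<and> fL (tail \<union> {a}) = tail \<union> {base_point a}"
proof -
  have "tail \<subseteq> fL (tail \<union> {a})" using tail_subset_fL_iff lower_set_tail_insert[OF assms] by blast
  then obtain b where b: "b \<in> {1..N}" "fL (tail \<union> {a}) = tail \<union> {b}"
    using lower_set_tail_subset lower_set_fL lower_set_tail_insert[OF assms] by metis
  have "fL (tail \<union> {a}) - tail = {b}" using b tail_not_base by auto
  then show ?thesis using b unfolding base_point_def by simp
qed

lemma base_point_bij: "bij_betw base_point {1..N} {1..N}"
proof -
  have "inj_on base_point {1..N}"
  proof (rule inj_onI)
    fix x y assume xy: "x \<in> {1..N}" "y \<in> {1..N}" "base_point x = base_point y"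
    then have "fL (tail \<union> {x}) = fL (tail \<union> {y})" using fL_tail_insert_eq by metis
    then have "tail \<union> {x} = tail \<union> {y}" using fL_eq_iff lower_set_tail_insert xy by blast
    then show "x = y" using xy tail_not_base by blast
  qed
  moreover have "base_point ` {1..N} \<subseteq> {1..N}" using fL_tail_insert_eq by auto
  ultimately show ?thesis using endo_inj_surj[of "{1..N}"] by (simp add: bij_betw_def)
qed

lemma fR_tail_pair_eq:
  assumes "x \<in> {1..N}" "y \<in> {1..N}" "x \<noteq> y"
  shows "fR (tail \<union> {x, y}) = tail \<union> {base_point x, base_point y}"
proof -
  have up: "upper_set (tail \<union> {x, y})" using upper_set_tail_pair assms by blast
  have "base_point x \<noteq> base_point y" "base_point x \<in> {1..N}" "base_point y \<in> {1..N}"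
    using base_point_bij assms by (auto simp: bij_betw_def inj_on_eq_iff dest: fL_tail_insert_eq)
  then have up': "upper_set (tail \<union> {base_point x, base_point y})" using upper_set_tail_pair
    by blast
  have "fL (tail \<union> {x}) \<subseteq> fR (tail \<union> {x, y})" "fL (tail \<union> {y}) \<subseteq> fR (tail \<union> {x, y})"
    using subset_iff[OF lower_set_tail_insert up] assms by auto
  then have "tail \<union> {base_point x, base_point y} \<subseteq> fR (tail \<union> {x, y})"
    using fL_tail_insert_eq assms by auto
  moreover have "card (fR (tail \<union> {x, y})) \<le> card (tail \<union> {base_point x, base_point y})"
    using upper_set_fR[OF up] up' by (simp add: upper_set_def)
  ultimately show ?thesis using upper_set_finite[OF upper_set_fR[OF up]] by (metis card_seteq)
qed

lemma base_point_id: "a \<in> {1..N} \<Longrightarrow> base_point a = a"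
proof (rule base_automorphism.id_on)
  show "base_automorphism N base_point"
  proof
    show "6 \<le> N" by (rule six)
    show "bij_betw base_point {1..N} {1..N}" by (rule base_point_bij)
    fix x y assume xy: "x \<in> {1..N}" "y \<in> {1..N}"
    show "base_adj N (base_point x) (base_point y) \<longleftrightarrow> base_adj N x y"
    proof (cases "x = y")
      case True
      then show ?thesis using base_adj_irrefl[OF six] by simp
    next
      case False
      have "base_point x \<in> {1..N}" "base_point y \<in> {1..N}" using fL_tail_insert_eq xy by auto
      then show ?thesis
        using marked_iff[OF upper_set_tail_pair[OF xy False]] fR_tail_pair_eq[OF xy False]
          marked_tail_pair_iff xy by simp
    qed
  qed
qed

lemma fL_tail_insert: "a \<in> {1..N} \<Longrightarrow> fL (tail \<union> {a}) = tail \<union> {a}"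
  using fL_tail_insert_eq base_point_id by metis

lemma fR_tail_pair: "a \<in> {1..N} \<Longrightarrow> b \<in> {1..N} \<Longrightarrow> a \<noteq> b \<Longrightarrow> fR (tail \<union> {a, b}) = tail \<union> {a, b}"
  using fR_tail_pair_eq base_point_id by simp

lemma mem_fL_near:
  assumes "i \<in> tail" "a \<in> {1..N}" "x \<in> {1..N}" "a \<noteq> x"
  shows "x \<in> fL ((tail - {i}) \<union> {a, x})"
proof (rule ccontr)
  let ?A = "(tail - {i}) \<union> {a, x}"
  assume "x \<notin> fL ?A"
  have low: "lower_set ?A" using lower_set_near assms by blast
  have "fL ?A \<subseteq> fR (tail \<union> {a, x})"
    using subset_iff[OF low upper_set_tail_pair[OF assms(2-4)]] by auto
  then have "fL ?A \<subseteq> tail \<union> {a}" using fR_tail_pair assms \<open>x \<notin> fL ?A\<close> by auto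
  moreover have "card (tail \<union> {a}) \<le> card (fL ?A)"
    using lower_set_fL[OF low] lower_set_tail_insert[OF assms(2)] by (simp add: lower_set_def)
  ultimately have "fL ?A = tail \<union> {a}"
    using lower_set_finite[OF lower_set_tail_insert[OF assms(2)]] by (metis card_seteq)
  then have "tail \<subseteq> ?A" using tail_subset_fL_iff[OF low] by blast
  moreover have "i \<notin> ?A" using assms tail_not_base by auto
  ultimately show False using assms(1) by blast
qed

lemma fR_gadget:
  assumes i: "i \<in> tail"
  shows "fR ((tail - {i}) \<union> gadget i) = (tail - {i}) \<union> gadget i"
proof -
  let ?B = "(tail - {i}) \<union> gadget i"
  have up: "upper_set ?B" using upper_set_gadget i .
  have "marked (fR ?B)" using marked_iff[OF up] i unfolding marked_def by blast
  moreover have "\<not> tail \<subseteq> fR ?B"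
    using tail_subset_if_tail_subset_fR[OF up] i not_mem_gadget[OF i] by blast
  ultimately obtain j where j: "j \<in> tail" "fR ?B = (tail - {j}) \<union> gadget j"
    unfolding marked_def by blast
  have "gadget i \<subseteq> fR ?B"
  proof
    fix y assume y: "y \<in> gadget i"
    define a where "a = (if y = 2 then (4::nat) else 2)"
    have a: "a \<in> gadget i" "a \<noteq> y" unfolding a_def gadget_def by auto
    have ay: "a \<in> {1..N}" "y \<in> {1..N}" using a y gadget_subset[OF i] by auto
    have "(tail - {i}) \<union> {a, y} \<subseteq> ?B" using a y by auto
    then have "fL ((tail - {i}) \<union> {a, y}) \<subseteq> fR ?B"
      using subset_iff[OF lower_set_near[OF i ay a(2)] up] by simp
    then show "y \<in> fR ?B" using mem_fL_near[OF i ay a(2)] by blast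
  qed
  then have "gadget i \<subseteq> gadget j" using j gadget_subset[OF i] tail_not_base by blast
  then have "gadget i = gadget j"
    using card_gadget i j(1) gadget_subset[OF j(1)]
    by (metis card_subset_eq finite_atLeastAtMost finite_subset)
  then show ?thesis using gadget_inj i j by blast
qed

lemma fL_near_2_4:
  assumes i: "i \<in> tail"
  shows "fL ((tail - {i}) \<union> {2, 4}) = (tail - {i}) \<union> {2, 4}"
proof (rule fL_fixed_if_two_fixed_above)
  have r: "(2::nat) \<in> {1..N}" "(4::nat) \<in> {1..N}" using six by auto
  show "upper_set ((tail - {i}) \<union> gadget i)" using upper_set_gadget i .
  show "upper_set (tail \<union> {2, 4})" using upper_set_tail_pair r by auto
  show "(tail - {i}) \<union> gadget i \<noteq> tail \<union> {2, 4}" using i not_mem_gadget[OF i] by blast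
  show "lower_set ((tail - {i}) \<union> {2, 4})" using lower_set_near i r by auto
  show "(tail - {i}) \<union> {2, 4} \<subseteq> (tail - {i}) \<union> gadget i" by (auto simp: gadget_def)
  show "(tail - {i}) \<union> {2, 4} \<subseteq> tail \<union> {2, 4}" by auto
  show "fR ((tail - {i}) \<union> gadget i) = (tail - {i}) \<union> gadget i" using fR_gadget i .
  show "fR (tail \<union> {2, 4}) = tail \<union> {2, 4}" using fR_tail_pair r by auto
qed

lemma fL_near_step:
  assumes i: "i \<in> tail" and r: "a \<in> {1..N}" "b \<in> {1..N}" "x \<in> {1..N}"
    and d: "a \<noteq> b" "x \<noteq> a" "x \<noteq> b"
    and fixed: "fL ((tail - {i}) \<union> {a, b}) = (tail - {i}) \<union> {a, b}"
  shows "fL ((tail - {i}) \<union> {a, x}) = (tail - {i}) \<union> {a, x}"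
proof -
  let ?A = "(tail - {i}) \<union> {a, b}" and ?C = "(tail - {i}) \<union> {a, b, x}"
    and ?A' = "(tail - {i}) \<union> {a, x}"
  have up: "upper_set ?C" using upper_set_near[OF i r] d by auto
  have low: "lower_set ?A" "lower_set ?A'" using lower_set_near i r d by auto
  have "?A \<subseteq> fR ?C" using subset_iff[OF low(1) up] fixed by auto
  moreover have "fL ?A' \<subseteq> fR ?C" using subset_iff[OF low(2) up] by auto
  then have "x \<in> fR ?C" using mem_fL_near[OF i r(1,3)] d by blast
  ultimately have "?C \<subseteq> fR ?C" by auto
  moreover have "card (fR ?C) \<le> card ?C" using upper_set_fR[OF up] up by (simp add: upper_set_def)
  ultimately have "fR ?C = ?C" using upper_set_finite[OF upper_set_fR[OF up]] by (metis card_seteq)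
  moreover have "?C \<noteq> tail \<union> {a, x}" using i tail_not_base[OF i] r by blast
  ultimately show ?thesis
    using fL_fixed_if_two_fixed_above[OF up upper_set_tail_pair[OF r(1,3)] _ low(2)]
      fR_tail_pair r d by auto
qed

lemma fL_near:
  assumes i: "i \<in> tail" and r: "c \<in> {1..N}" "d \<in> {1..N}" "c \<noteq> d"
  shows "fL ((tail - {i}) \<union> {c, d}) = (tail - {i}) \<union> {c, d}"
proof -
  let ?fixed = "\<lambda>a b. fL ((tail - {i}) \<union> {a, b}) = (tail - {i}) \<union> {a, b}"
  have swap: "?fixed a b \<Longrightarrow> ?fixed b a" for a b by (simp add: insert_commute)
  have step: "?fixed a x"
    if "?fixed a b" "a \<in> {1..N}" "b \<in> {1..N}" "x \<in> {1..N}" "a \<noteq> b" "x \<noteq> a" for a b x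
    using that fL_near_step[OF i that(2-4) that(5,6) _ that(1)] by (cases "x = b") auto
  have r24: "(2::nat) \<in> {1..N}" "(4::nat) \<in> {1..N}" using six by auto
  have "?fixed 2 4" using fL_near_2_4 i .
  show ?thesis
  proof (cases "c = 2")
    case True
    then show ?thesis using step[OF \<open>?fixed 2 4\<close> r24 r(2)] r by auto
  next
    case False
    then have "?fixed c 2" using step[OF \<open>?fixed 2 4\<close> r24 r(1)] swap by auto
    then show ?thesis using step[of c 2 d] r r24 False by auto
  qed
qed

lemma fR_insert_fixed:
  assumes "lower_set A" "j \<in> tail - A" "b\<^sub>1 \<in> A - tail" "b\<^sub>2 \<in> A - tail" "b\<^sub>1 \<noteq> b\<^sub>2"
    and "\<And>b. b \<in> {b\<^sub>1, b\<^sub>2} \<Longrightarrow> fL (insert j (A - {b})) = insert j (A - {b})"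
  shows "fR (insert j A) = insert j A"
proof (rule fR_fixed_if_two_fixed_below)
  have fin: "finite A" using lower_set_finite assms(1) .
  have j: "j \<in> {1..N + t}" using assms(2) tail_subset by blast
  show "upper_set (insert j A)" using upper_set_insert assms(1,2) j by blast
  show "lower_set (insert j (A - {b\<^sub>1}))" "lower_set (insert j (A - {b\<^sub>2}))"
    using assms(1-4) fin j by (auto simp: lower_set_def card_Diff_singleton)
  show "insert j (A - {b\<^sub>1}) \<noteq> insert j (A - {b\<^sub>2})"
  proof
    assume eq: "insert j (A - {b\<^sub>1}) = insert j (A - {b\<^sub>2})"
    have "b\<^sub>2 \<in> insert j (A - {b\<^sub>1})" using assms(4,5) by blast
    then have "b\<^sub>2 \<in> insert j (A - {b\<^sub>2})" by (simp only: eq)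
    then show False using assms(2,4) by blast
  qed
qed (use assms(6) in auto)

lemma card_Diff_tail: "lower_set A \<Longrightarrow> card (A - tail) = card (tail - A) + 1"
  using card_Diff_subset_Int[of A tail] card_Int_Diff[of tail A] lower_set_finite
  by (simp add: lower_set_def Int_commute)

lemma fL_fixed_if_smaller_gaps_fixed:
  assumes low: "lower_set A" and gap: "2 \<le> card (tail - A)"
    and IH: "\<And>A'. lower_set A' \<Longrightarrow> card (tail - A') < card (tail - A) \<Longrightarrow> fL A' = A'"
  shows "fL A = A"
proof -
  have fin: "finite A" using lower_set_finite low .
  obtain i i' where i: "i \<in> tail - A" "i' \<in> tail - A" "i \<noteq> i'"
    using gap card_le_Suc0_iff_eq[of "tail - A"] by fastforce
  obtain b\<^sub>1 b\<^sub>2 where b: "b\<^sub>1 \<in> A - tail" "b\<^sub>2 \<in> A - tail" "b\<^sub>1 \<noteq> b\<^sub>2"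
    using gap card_Diff_tail[OF low] card_le_Suc0_iff_eq[of "A - tail"] fin by fastforce
  have "fL A \<subseteq> insert j A" if j: "j \<in> tail - A" for j
  proof -
    have up: "upper_set (insert j A)" using upper_set_insert[OF low] j tail_subset by blast
    have "fR (insert j A) = insert j A"
    proof (rule fR_insert_fixed[OF low j b])
      fix b assume "b \<in> {b\<^sub>1, b\<^sub>2}"
      then have b: "b \<in> A - tail" using b by blast
      then have "tail - insert j (A - {b}) = (tail - A) - {j}" by blast
      then have "card (tail - insert j (A - {b})) < card (tail - A)"
        using j card_Diff1_less[of "tail - A" j] by simp
      moreover have "lower_set (insert j (A - {b}))"
        using low j fin tail_subset b by (auto simp: lower_set_def card_Diff_singleton)
      ultimately show "fL (insert j (A - {b})) = insert j (A - {b})" using IH by blast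
    qed
    then show ?thesis using subset_iff[OF low up] by auto
  qed
  then have "fL A \<subseteq> insert i A \<inter> insert i' A" using i by blast
  also have "\<dots> = A" using i by auto
  finally show ?thesis
    using card_seteq[OF fin] lower_set_fL[OF low] low by (metis lower_set_def order_refl)
qed

lemma fL_id: "lower_set A \<Longrightarrow> fL A = A"
proof (induction "card (tail - A)" arbitrary: A rule: less_induct)
  case less
  consider "card (tail - A) = 0" | "card (tail - A) = 1" | "2 \<le> card (tail - A)" by linarith
  then show ?case
  proof cases
    case 1
    then have "tail \<subseteq> A" by (simp add: card_eq_0_iff)
    then show ?thesis using lower_set_tail_subset less.prems fL_tail_insert by metis
  next
    case 2
    then obtain i where i: "tail - A = {i}" using card_1_singletonE by blast
    have "card (A - tail) = 2" using card_Diff_tail[OF less.prems] 2 by simp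
    then obtain a b where ab: "A - tail = {a, b}" "a \<noteq> b" by (meson card_2_iff)
    have "A - tail \<subseteq> {1..N}" using less.prems base_if_not_tail unfolding lower_set_def by blast
    moreover have "A = (tail - {i}) \<union> {a, b}" using i ab by blast
    ultimately show ?thesis using fL_near[of i a b] i ab by auto
  next
    case 3
    then show ?thesis using fL_fixed_if_smaller_gaps_fixed less by blast
  qed
qed

lemma fR_id: "upper_set B \<Longrightarrow> fR B = B"
proof -
  assume up: "upper_set B"
  then have "\<not> card B \<le> Suc 0" by (simp add: upper_set_def)
  then obtain b\<^sub>1 b\<^sub>2 where b: "b\<^sub>1 \<in> B" "b\<^sub>2 \<in> B" "b\<^sub>1 \<noteq> b\<^sub>2"
    using card_le_Suc0_iff_eq upper_set_finite[OF up] by blast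
  have low: "lower_set (B - {b})" if "b \<in> B" for b
    using up that upper_set_finite[OF up] unfolding lower_set_def upper_set_def
    by (auto simp: card_Diff_singleton)
  show ?thesis
  proof (rule fR_fixed_if_two_fixed_below)
    show "B - {b\<^sub>1} \<noteq> B - {b\<^sub>2}" using b by blast
  qed (use b low up fL_id in auto)
qed

end

section \<open>Three colours suffice\<close>

lemma bij_betw_restrict_invariant:
  assumes "bij_betw f V V" "P \<subseteq> V" "f ` P \<subseteq> P" "f ` (V - P) \<subseteq> V - P"
  shows "bij_betw f P P"
proof -
  have "P \<subseteq> f ` P"
  proof
    fix y assume "y \<in> P"
    then obtain x where "x \<in> V" "y = f x" using assms(1,2) bij_betw_imp_surj_on by blast
    then show "y \<in> f ` P" using \<open>y \<in> P\<close> assms(4) by blast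
  qed
  then show ?thesis
    using assms(1-3) by (auto simp: bij_betw_def intro: inj_on_subset)
qed

lemma bij_betw_projl_Inl:
  assumes "bij_betw f (Inl ` X) (Inl ` X)"
  shows "bij_betw (\<lambda>x. projl (f (Inl x))) X X"
proof -
  have "bij_betw Inl X (Inl ` X)" by (simp add: bij_betw_imageI)
  moreover have "bij_betw projl (Inl ` X) X" by (simp add: bij_betw_def inj_on_def image_image)
  ultimately show ?thesis using bij_betw_trans[OF bij_betw_trans[OF _ assms]]
    by (simp add: comp_def)
qed

lemma bij_betw_projr_Inr:
  assumes "bij_betw f (Inr ` X) (Inr ` X)"
  shows "bij_betw (\<lambda>x. projr (f (Inr x))) X X"
proof -
  have "bij_betw Inr X (Inr ` X)" by (simp add: bij_betw_imageI)
  moreover have "bij_betw projr (Inr ` X) X" by (simp add: bij_betw_def inj_on_def image_image)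
  ultimately show ?thesis using bij_betw_trans[OF bij_betw_trans[OF _ assms]]
    by (simp add: comp_def)
qed

context lg_construction
begin

text \<open>A constant rather than an abbreviation: the simplifier would rewrite \<open>t + 2\<close> to
  \<open>Suc (Suc t)\<close> and the membership lemmas below would no longer apply.\<close>
definition vertices :: "(nat set + nat set) set" where
  "vertices = LG1_V (t + 2) (N + t)"

lemma Inl_mem_vertices_iff: "Inl A \<in> vertices \<longleftrightarrow> lower_set A"
  by (simp add: vertices_def Inl_mem_LG1_V lower_set_def)

lemma Inr_mem_vertices_iff: "Inr B \<in> vertices \<longleftrightarrow> upper_set B"
  by (simp add: vertices_def Inr_mem_LG1_V upper_set_def)

lemma vertices_eq: "vertices = Inl ` Collect lower_set \<union> Inr ` Collect upper_set"
  unfolding vertices_def LG1_V_def lower_set_def upper_set_def by auto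

lemma lower_upper_psubset_iff: "lower_set A \<Longrightarrow> upper_set B \<Longrightarrow> A \<subset> B \<longleftrightarrow> A \<subseteq> B"
  unfolding lower_set_def upper_set_def by auto

lemma colouring_preserving_automorphism_id:
  assumes aut: "is_automorphism vertices LG1_E f"
    and col: "\<And>v. v \<in> vertices \<Longrightarrow> colouring (f v) = colouring v"
    and v: "v \<in> vertices"
  shows "f v = v"
proof -
  let ?L = "Inl ` Collect lower_set" and ?R = "Inr ` Collect upper_set"
  define fL where "fL A = projl (f (Inl A))" for A
  define fR where "fR B = projr (f (Inr B))" for B
  have bij: "bij_betw f vertices vertices" using aut by (simp add: is_automorphism_def)
  have maps: "f u \<in> vertices" if "u \<in> vertices" for u using bij_betw_apply[OF bij that] .
  have f_Inl: "f (Inl A) = Inl (fL A) \<and> lower_set (fL A)" if "lower_set A" for A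
    using maps[of "Inl A"] col[of "Inl A"] that unfolding fL_def
    by (cases "f (Inl A)") (auto simp: Inl_mem_vertices_iff colouring_def split: if_splits)
  have f_Inr: "f (Inr B) = Inr (fR B) \<and> upper_set (fR B) \<and> (marked (fR B) \<longleftrightarrow> marked B)"
    if "upper_set B" for B
    using maps[of "Inr B"] col[of "Inr B"] that unfolding fR_def
    by (cases "f (Inr B)") (auto simp: Inr_mem_vertices_iff colouring_def split: if_splits)
  have "f ` ?L \<subseteq> ?L" "f ` ?R \<subseteq> ?R" using f_Inl f_Inr by auto
  moreover have "vertices - ?L = ?R" "vertices - ?R = ?L" unfolding vertices_eq by auto
  ultimately have "bij_betw f ?L ?L" "bij_betw f ?R ?R"
    using bij_betw_restrict_invariant[OF bij] unfolding vertices_eq by auto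
  then have "bij_betw fL (Collect lower_set) (Collect lower_set)"
    "bij_betw fR (Collect upper_set) (Collect upper_set)"
    unfolding fL_def fR_def by (auto intro: bij_betw_projl_Inl bij_betw_projr_Inr)
  moreover have "fL A \<subseteq> fR B \<longleftrightarrow> A \<subseteq> B" if "lower_set A" "upper_set B" for A B
  proof -
    have "LG1_E (f (Inl A)) (f (Inr B)) = LG1_E (Inl A) (Inr B)"
      using aut that by (simp add: is_automorphism_def Inl_mem_vertices_iff Inr_mem_vertices_iff)
    then show ?thesis using f_Inl[OF that(1)] f_Inr[OF that(2)] lower_upper_psubset_iff that by simp
  qed
  ultimately interpret marked_preserving_maps N t fL fR
    using f_Inr by unfold_locales auto
  show ?thesis
    using v f_Inl f_Inr fL_id fR_id by (auto simp: vertices_eq)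
qed

lemma distinguishing_colouring: "distinguishing vertices LG1_E colouring"
  unfolding distinguishing_def
proof (intro allI impI ballI)
  fix f v
  assume f: "is_automorphism vertices LG1_E f \<and>
    (\<forall>i. f ` {v \<in> vertices. colouring v = i} = {v \<in> vertices. colouring v = i})"
    and v: "v \<in> vertices"
  show "f v = v"
    using colour_preserved_if_classes_preserved[OF conjunct2[OF f]] v
    by (rule colouring_preserving_automorphism_id[OF conjunct1[OF f]])
qed

lemma proper_colouring: "proper_coloring vertices LG1_E colouring"
  unfolding proper_coloring_def
proof (intro ballI impI)
  fix u v assume "LG1_E u v"
  then show "colouring u \<noteq> colouring v" by (cases u; cases v) (auto simp: colouring_def)
qed

lemma colouring_range: "colouring ` vertices \<subseteq> {..<3}"
  by (auto simp: colouring_def split: sum.splits)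

end

theorem mainTheorem4:
  fixes k n :: nat
  assumes "k \<ge> 2"
    and "n \<ge> (if k = 2 then 6 else 2 * k + 1)"
  shows "chi_D (LG1_V k n) LG1_E = 3"
proof -
  define t where "t = k - 2"
  define N where "N = n - t"
  have "6 \<le> N" "t + 5 \<le> N" and kn: "k = t + 2" "n = N + t" "k \<le> n"
    using assms unfolding t_def N_def by (auto split: if_splits)
  then interpret lg_construction N t by unfold_locales
  have V: "LG1_V k n = vertices" by (simp add: vertices_def kn)
  show ?thesis
    unfolding V
  proof (rule chi_D_eqI[OF colouring_range proper_colouring distinguishing_colouring])
    fix c l assume "l < 3" "c ` vertices \<subseteq> {..<l}" "proper_coloring vertices LG1_E c"
    then have "c ` vertices \<subseteq> {..<2}" "proper_coloring vertices LG1_E c" by auto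
    then show "\<not> distinguishing vertices LG1_E c"
      using LG1_two_colourings_not_distinguishing[OF assms(1) kn(3)] unfolding V by blast
  qed
qed

end
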